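(* Let $k$ be a field and $\mathsf{E}$ a locally finite $k$-linear category. Then every $\mathsf{E}$-module (left or right) is the direct limit (directed union) of its locally finite $\mathsf{E}$-submodules.
   Context: A small $k$-linear category $\mathsf{E}$ has $k$-vector spaces $\operatorname{Hom}_\mathsf{E}(x,y)$, $k$-bilinear associative composition and identities with $\mathrm{id}_x\ne0$. A left (resp. right) $\mathsf{E}$-module is a $k$-linear functor $\mathsf{E}\to k\text{-Vect}$ (resp. $\mathsf{E}^{op}\to k\text{-Vect}$); it is locally finite if all its values are finite-dimensional. Write $x\preceq y$ if there are $n\ge1$ and objects $x=z_0,\dots,z_n=y$ with $\operatorname{Hom}_\mathsf{E}(z_{i-1},z_i)\neq0$ for all $i$. $\mathsf{E}$ is locally finite if all Hom spaces are finite-dimensional and every $\{z:x\preceq z\preceq y\}$ is finite. *)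

theory Defs
  imports Main "HOL.Vector_Spaces"
begin

text \<open>All Hom spaces
  are subspaces of one ambient k-vector space of type 'm (scalar multiplication sm);
  composition is indexed by the three objects involved: comp x y z g f is
  g composed with f, for f in Hom x y and g in Hom y z.\<close>

definition kcat ::
  "('k::field \<Rightarrow> 'm::ab_group_add \<Rightarrow> 'm) \<Rightarrow> 'o set \<Rightarrow> ('o \<Rightarrow> 'o \<Rightarrow> 'm set)
   \<Rightarrow> ('o \<Rightarrow> 'o \<Rightarrow> 'o \<Rightarrow> 'm \<Rightarrow> 'm \<Rightarrow> 'm) \<Rightarrow> ('o \<Rightarrow> 'm) \<Rightarrow> bool" where
  "kcat sm Ob Hom cmp idm \<longleftrightarrow>
     vector_space sm \<and>
     (\<forall>x\<in>Ob. \<forall>y\<in>Ob. module.subspace sm (Hom x y)) \<and>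
     (\<forall>x\<in>Ob. \<forall>y\<in>Ob. \<forall>z\<in>Ob. \<forall>f\<in>Hom x y. \<forall>g\<in>Hom y z. cmp x y z g f \<in> Hom x z) \<and>
     (\<forall>x\<in>Ob. \<forall>y\<in>Ob. \<forall>z\<in>Ob. \<forall>f\<in>Hom x y. \<forall>f'\<in>Hom x y. \<forall>g\<in>Hom y z. \<forall>g'\<in>Hom y z. \<forall>c.
        cmp x y z (g + g') f = cmp x y z g f + cmp x y z g' f \<and>
        cmp x y z g (f + f') = cmp x y z g f + cmp x y z g f' \<and>
        cmp x y z (sm c g) f = sm c (cmp x y z g f) \<and>
        cmp x y z g (sm c f) = sm c (cmp x y z g f)) \<and>
     (\<forall>w\<in>Ob. \<forall>x\<in>Ob. \<forall>y\<in>Ob. \<forall>z\<in>Ob. \<forall>f\<in>Hom w x. \<forall>g\<in>Hom x y. \<forall>h\<in>Hom y z.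
        cmp w y z h (cmp w x y g f) = cmp w x z (cmp x y z h g) f) \<and>
     (\<forall>x\<in>Ob. idm x \<in> Hom x x \<and> idm x \<noteq> 0) \<and>
     (\<forall>x\<in>Ob. \<forall>y\<in>Ob. \<forall>f\<in>Hom x y. cmp x y y (idm y) f = f \<and> cmp x x y f (idm x) = f)"

definition fin_dim_sub :: "('k::field \<Rightarrow> 'v::ab_group_add \<Rightarrow> 'v) \<Rightarrow> 'v set \<Rightarrow> bool" where
  "fin_dim_sub s S \<longleftrightarrow> (\<exists>B. finite B \<and> B \<subseteq> S \<and> module.span s B = S)"

definition kcat_prec :: "'o set \<Rightarrow> ('o \<Rightarrow> 'o \<Rightarrow> 'm::zero set) \<Rightarrow> ('o \<times> 'o) set" where
  "kcat_prec Ob Hom = {(x, y). x \<in> Ob \<and> y \<in> Ob \<and> Hom x y \<noteq> {0}}\<^sup>+"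

definition locally_finite_kcat ::
  "('k::field \<Rightarrow> 'm::ab_group_add \<Rightarrow> 'm) \<Rightarrow> 'o set \<Rightarrow> ('o \<Rightarrow> 'o \<Rightarrow> 'm set)
   \<Rightarrow> ('o \<Rightarrow> 'o \<Rightarrow> 'o \<Rightarrow> 'm \<Rightarrow> 'm \<Rightarrow> 'm) \<Rightarrow> ('o \<Rightarrow> 'm) \<Rightarrow> bool" where
  "locally_finite_kcat sm Ob Hom cmp idm \<longleftrightarrow>
     kcat sm Ob Hom cmp idm \<and>
     (\<forall>x\<in>Ob. \<forall>y\<in>Ob. fin_dim_sub sm (Hom x y)) \<and>
     (\<forall>x\<in>Ob. \<forall>y\<in>Ob. finite {z. (x, z) \<in> kcat_prec Ob Hom \<and> (z, y) \<in> kcat_prec Ob Hom})"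

text \<open>Left module (covariant k-linear functor E \<rightarrow> k-Vect): values V x are subspaces of an
  ambient k-vector space of type 'v; act x y f maps V x to V y for f in Hom x y.\<close>
definition left_module ::
  "('k::field \<Rightarrow> 'm::ab_group_add \<Rightarrow> 'm) \<Rightarrow> 'o set \<Rightarrow> ('o \<Rightarrow> 'o \<Rightarrow> 'm set)
   \<Rightarrow> ('o \<Rightarrow> 'o \<Rightarrow> 'o \<Rightarrow> 'm \<Rightarrow> 'm \<Rightarrow> 'm) \<Rightarrow> ('o \<Rightarrow> 'm)
   \<Rightarrow> ('k \<Rightarrow> 'v::ab_group_add \<Rightarrow> 'v) \<Rightarrow> ('o \<Rightarrow> 'v set) \<Rightarrow> ('o \<Rightarrow> 'o \<Rightarrow> 'm \<Rightarrow> 'v \<Rightarrow> 'v) \<Rightarrow> bool" where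
  "left_module sm Ob Hom cmp idm sv V act \<longleftrightarrow>
     vector_space sv \<and>
     (\<forall>x\<in>Ob. module.subspace sv (V x)) \<and>
     (\<forall>x\<in>Ob. \<forall>y\<in>Ob. \<forall>f\<in>Hom x y. \<forall>v\<in>V x. act x y f v \<in> V y) \<and>
     (\<forall>x\<in>Ob. \<forall>y\<in>Ob. \<forall>f\<in>Hom x y. \<forall>f'\<in>Hom x y. \<forall>u\<in>V x. \<forall>v\<in>V x. \<forall>c.
        act x y f (u + v) = act x y f u + act x y f v \<and>
        act x y f (sv c v) = sv c (act x y f v) \<and>
        act x y (f + f') v = act x y f v + act x y f' v \<and>
        act x y (sm c f) v = sv c (act x y f v)) \<and>
     (\<forall>x\<in>Ob. \<forall>v\<in>V x. act x x (idm x) v = v) \<and>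
     (\<forall>x\<in>Ob. \<forall>y\<in>Ob. \<forall>z\<in>Ob. \<forall>f\<in>Hom x y. \<forall>g\<in>Hom y z. \<forall>v\<in>V x.
        act x z (cmp x y z g f) v = act y z g (act x y f v))"

definition right_module ::
  "('k::field \<Rightarrow> 'm::ab_group_add \<Rightarrow> 'm) \<Rightarrow> 'o set \<Rightarrow> ('o \<Rightarrow> 'o \<Rightarrow> 'm set)
   \<Rightarrow> ('o \<Rightarrow> 'o \<Rightarrow> 'o \<Rightarrow> 'm \<Rightarrow> 'm \<Rightarrow> 'm) \<Rightarrow> ('o \<Rightarrow> 'm)
   \<Rightarrow> ('k \<Rightarrow> 'v::ab_group_add \<Rightarrow> 'v) \<Rightarrow> ('o \<Rightarrow> 'v set) \<Rightarrow> ('o \<Rightarrow> 'o \<Rightarrow> 'm \<Rightarrow> 'v \<Rightarrow> 'v) \<Rightarrow> bool" where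
  "right_module sm Ob Hom cmp idm sv V act \<longleftrightarrow>
     vector_space sv \<and>
     (\<forall>x\<in>Ob. module.subspace sv (V x)) \<and>
     (\<forall>x\<in>Ob. \<forall>y\<in>Ob. \<forall>f\<in>Hom x y. \<forall>v\<in>V y. act x y f v \<in> V x) \<and>
     (\<forall>x\<in>Ob. \<forall>y\<in>Ob. \<forall>f\<in>Hom x y. \<forall>f'\<in>Hom x y. \<forall>u\<in>V y. \<forall>v\<in>V y. \<forall>c.
        act x y f (u + v) = act x y f u + act x y f v \<and>
        act x y f (sv c v) = sv c (act x y f v) \<and>
        act x y (f + f') v = act x y f v + act x y f' v \<and>
        act x y (sm c f) v = sv c (act x y f v)) \<and>
     (\<forall>x\<in>Ob. \<forall>v\<in>V x. act x x (idm x) v = v) \<and>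
     (\<forall>x\<in>Ob. \<forall>y\<in>Ob. \<forall>z\<in>Ob. \<forall>f\<in>Hom x y. \<forall>g\<in>Hom y z. \<forall>v\<in>V z.
        act x z (cmp x y z g f) v = act x y f (act y z g v))"

definition left_submodule ::
  "'o set \<Rightarrow> ('o \<Rightarrow> 'o \<Rightarrow> 'm set) \<Rightarrow> ('k::field \<Rightarrow> 'v::ab_group_add \<Rightarrow> 'v) \<Rightarrow> ('o \<Rightarrow> 'v set)
   \<Rightarrow> ('o \<Rightarrow> 'o \<Rightarrow> 'm \<Rightarrow> 'v \<Rightarrow> 'v) \<Rightarrow> ('o \<Rightarrow> 'v set) \<Rightarrow> bool" where
  "left_submodule Ob Hom sv V act N \<longleftrightarrow>
     (\<forall>x\<in>Ob. N x \<subseteq> V x \<and> module.subspace sv (N x)) \<and>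
     (\<forall>x\<in>Ob. \<forall>y\<in>Ob. \<forall>f\<in>Hom x y. \<forall>v\<in>N x. act x y f v \<in> N y)"

definition right_submodule ::
  "'o set \<Rightarrow> ('o \<Rightarrow> 'o \<Rightarrow> 'm set) \<Rightarrow> ('k::field \<Rightarrow> 'v::ab_group_add \<Rightarrow> 'v) \<Rightarrow> ('o \<Rightarrow> 'v set)
   \<Rightarrow> ('o \<Rightarrow> 'o \<Rightarrow> 'm \<Rightarrow> 'v \<Rightarrow> 'v) \<Rightarrow> ('o \<Rightarrow> 'v set) \<Rightarrow> bool" where
  "right_submodule Ob Hom sv V act N \<longleftrightarrow>
     (\<forall>x\<in>Ob. N x \<subseteq> V x \<and> module.subspace sv (N x)) \<and>
     (\<forall>x\<in>Ob. \<forall>y\<in>Ob. \<forall>f\<in>Hom x y. \<forall>v\<in>N y. act x y f v \<in> N x)"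

definition locally_finite_mod :: "'o set \<Rightarrow> ('k::field \<Rightarrow> 'v::ab_group_add \<Rightarrow> 'v) \<Rightarrow> ('o \<Rightarrow> 'v set) \<Rightarrow> bool" where
  "locally_finite_mod Ob sv N \<longleftrightarrow> (\<forall>x\<in>Ob. fin_dim_sub sv (N x))"

definition directed_union :: "'o set \<Rightarrow> ('o \<Rightarrow> 'v set) \<Rightarrow> ('o \<Rightarrow> 'v set) set \<Rightarrow> bool" where
  "directed_union Ob V S \<longleftrightarrow>
     S \<noteq> {} \<and>
     (\<forall>N1\<in>S. \<forall>N2\<in>S. \<exists>N3\<in>S. \<forall>x\<in>Ob. N1 x \<subseteq> N3 x \<and> N2 x \<subseteq> N3 x) \<and>
     (\<forall>x\<in>Ob. V x = (\<Union>N\<in>S. N x))"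

end

theory Submission
  imports Defs
begin

(* A vector v in V x generates the submodule y \<mapsto> E(x, y) v, whose value at y is a linear image
   of the finite-dimensional space E(x, y), so every vector lies in a locally finite submodule.
   The zero module is locally finite and sums of locally finite submodules are locally finite,
   so these submodules form a directed family with union V.  Right modules are left modules
   over the opposite category. *)

lemma fin_dim_sub_subspace:
  assumes "vector_space s" and "fin_dim_sub s S"
  shows "module.subspace s S"
proof -
  interpret vector_space s by fact
  show ?thesis using assms(2) unfolding fin_dim_sub_def by auto
qed

lemma fin_dim_sub_zero:
  assumes "vector_space s"
  shows "fin_dim_sub s {0}"
proof -
  interpret vector_space s by fact
  show ?thesis unfolding fin_dim_sub_def by (intro exI[of _ "{}"] conjI) simp_all
qed

lemma fin_dim_sub_sum:
  assumes "vector_space s" and "fin_dim_sub s A" and "fin_dim_sub s C"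
  shows "fin_dim_sub s {a + c | a c. a \<in> A \<and> c \<in> C}"
proof -
  interpret vector_space s by fact
  obtain BA BC where "finite BA" "span BA = A" "finite BC" "span BC = C"
    using assms(2,3) unfolding fin_dim_sub_def by blast
  then have "span (BA \<union> BC) = {a + c | a c. a \<in> A \<and> c \<in> C}"
    using span_Un[of BA BC] by simp
  moreover have "BA \<union> BC \<subseteq> span (BA \<union> BC)"
    by (rule span_superset)
  ultimately show ?thesis
    unfolding fin_dim_sub_def using \<open>finite BA\<close> \<open>finite BC\<close>
    by (intro exI[of _ "BA \<union> BC"] conjI) simp_all
qed

lemma (in vector_space_pair) span_image_linear_on:
  assumes add: "\<And>a b. a \<in> vs1.span B \<Longrightarrow> b \<in> vs1.span B \<Longrightarrow> g (a + b) = g a + g b"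
    and scale: "\<And>c a. a \<in> vs1.span B \<Longrightarrow> g (s1 c a) = s2 c (g a)"
  shows "g ` vs1.span B = vs2.span (g ` B)"
proof
  have g0: "g 0 = 0"
    using add[OF vs1.span_zero vs1.span_zero] by simp
  show "g ` vs1.span B \<subseteq> vs2.span (g ` B)"
  proof clarify
    fix a assume "a \<in> vs1.span B"
    then have "a \<in> vs1.span B \<and> g a \<in> vs2.span (g ` B)"
    proof (induction rule: vs1.span_induct_alt)
      case base
      then show ?case using g0 vs1.span_zero vs2.span_zero by simp
    next
      case (step c b a)
      then have "s1 c b \<in> vs1.span B" "s1 c b + a \<in> vs1.span B"
        by (auto intro: vs1.span_base vs1.span_scale vs1.span_add)
      moreover have "g (s1 c b + a) = s2 c (g b) + g a"
        using add scale step calculation by (metis vs1.span_base)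
      ultimately show ?case
        using step by (auto intro: vs2.span_add vs2.span_scale vs2.span_base)
    qed
    then show "g a \<in> vs2.span (g ` B)" ..
  qed
  show "vs2.span (g ` B) \<subseteq> g ` vs1.span B"
  proof
    fix y assume "y \<in> vs2.span (g ` B)"
    then show "y \<in> g ` vs1.span B"
    proof (induction rule: vs2.span_induct_alt)
      case base
      then show ?case using g0 vs1.span_zero by (metis image_eqI)
    next
      case (step c y' y)
      then obtain b a where "b \<in> B" "y' = g b" "a \<in> vs1.span B" "y = g a" by blast
      moreover have "s1 c b \<in> vs1.span B" using \<open>b \<in> B\<close> by (intro vs1.span_scale vs1.span_base)
      ultimately have "s2 c y' + y = g (s1 c b + a)" and "s1 c b + a \<in> vs1.span B"
        using add scale vs1.span_base vs1.span_add by auto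
      then show ?case by blast
    qed
  qed
qed

lemma fin_dim_sub_image:
  assumes "vector_space s1" and "vector_space s2" and "fin_dim_sub s1 H"
    and "\<And>a b. a \<in> H \<Longrightarrow> b \<in> H \<Longrightarrow> g (a + b) = g a + g b"
    and "\<And>c a. a \<in> H \<Longrightarrow> g (s1 c a) = s2 c (g a)"
  shows "fin_dim_sub s2 (g ` H)"
proof -
  interpret vector_space_pair s1 s2
    using assms(1,2) by (rule vector_space_pair.intro)
  obtain B where B: "finite B" "B \<subseteq> H" "vs1.span B = H"
    using assms(3) unfolding fin_dim_sub_def by blast
  then have "g ` H = vs2.span (g ` B)"
    using assms(4,5) span_image_linear_on[of B g] by simp
  then show ?thesis
    unfolding fin_dim_sub_def using B by blast
qed

lemma kcatD:
  assumes "kcat sm Ob Hom cmp idm"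
  shows kcat_vector_space: "vector_space sm"
    and kcat_comp_closed:
      "\<lbrakk>x \<in> Ob; y \<in> Ob; z \<in> Ob; f \<in> Hom x y; g \<in> Hom y z\<rbrakk> \<Longrightarrow> cmp x y z g f \<in> Hom x z"
    and kcat_id_closed: "x \<in> Ob \<Longrightarrow> idm x \<in> Hom x x"
  using assms unfolding kcat_def by simp_all

lemma kcat_opposite:
  assumes "kcat sm Ob Hom cmp idm"
  shows "kcat sm Ob (\<lambda>x y. Hom y x) (\<lambda>x y z g f. cmp z y x f g) idm"
  using assms unfolding kcat_def by simp

lemma left_moduleD:
  assumes "left_module sm Ob Hom cmp idm sv V act"
  shows left_module_vector_space: "vector_space sv"
    and left_module_subspace: "x \<in> Ob \<Longrightarrow> module.subspace sv (V x)"
    and left_module_act_closed: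
      "\<lbrakk>x \<in> Ob; y \<in> Ob; f \<in> Hom x y; v \<in> V x\<rbrakk> \<Longrightarrow> act x y f v \<in> V y"
    and left_module_act_add:
      "\<lbrakk>x \<in> Ob; y \<in> Ob; f \<in> Hom x y; u \<in> V x; v \<in> V x\<rbrakk>
        \<Longrightarrow> act x y f (u + v) = act x y f u + act x y f v"
    and left_module_act_add_hom:
      "\<lbrakk>x \<in> Ob; y \<in> Ob; f \<in> Hom x y; f' \<in> Hom x y; v \<in> V x\<rbrakk>
        \<Longrightarrow> act x y (f + f') v = act x y f v + act x y f' v"
    and left_module_act_scale_hom:
      "\<lbrakk>x \<in> Ob; y \<in> Ob; f \<in> Hom x y; v \<in> V x\<rbrakk> \<Longrightarrow> act x y (sm c f) v = sv c (act x y f v)"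
    and left_module_act_id: "\<lbrakk>x \<in> Ob; v \<in> V x\<rbrakk> \<Longrightarrow> act x x (idm x) v = v"
    and left_module_act_comp:
      "\<lbrakk>x \<in> Ob; y \<in> Ob; z \<in> Ob; f \<in> Hom x y; g \<in> Hom y z; v \<in> V x\<rbrakk>
        \<Longrightarrow> act x z (cmp x y z g f) v = act y z g (act x y f v)"
  using assms unfolding left_module_def by simp_all

lemma right_module_iff_left_module_opposite:
  "right_module sm Ob Hom cmp idm sv V act \<longleftrightarrow>
   left_module sm Ob (\<lambda>x y. Hom y x) (\<lambda>x y z g f. cmp z y x f g) idm sv V (\<lambda>x y f v. act y x f v)"
  unfolding right_module_def left_module_def by blast

lemma right_submodule_iff_left_submodule_opposite:
  "right_submodule Ob Hom sv V act N \<longleftrightarrow>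
   left_submodule Ob (\<lambda>x y. Hom y x) sv V (\<lambda>x y f v. act y x f v) N"
  unfolding right_submodule_def left_submodule_def by blast

lemma left_submodule_zero:
  assumes "left_module sm Ob Hom cmp idm sv V act"
  shows "left_submodule Ob Hom sv V act (\<lambda>_. {0})"
proof -
  interpret vector_space sv using assms by (rule left_module_vector_space)
  have "act x y f 0 = 0" if "x \<in> Ob" "y \<in> Ob" "f \<in> Hom x y" for x y f
    using left_module_act_add[OF assms that, of 0 0]
      subspace_0[OF left_module_subspace[OF assms \<open>x \<in> Ob\<close>]] by simp
  then show ?thesis
    using left_module_subspace[OF assms] unfolding left_submodule_def
    by (auto intro: subspace_0 simp: subspace_def)
qed

lemma left_submodule_sum:
  assumes M: "left_module sm Ob Hom cmp idm sv V act"
    and N1: "left_submodule Ob Hom sv V act N1" and N2: "left_submodule Ob Hom sv V act N2"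
  shows "left_submodule Ob Hom sv V act (\<lambda>x. {a + b | a b. a \<in> N1 x \<and> b \<in> N2 x})"
proof -
  interpret vector_space sv using M by (rule left_module_vector_space)
  have "{a + b | a b. a \<in> N1 x \<and> b \<in> N2 x} \<subseteq> V x" if "x \<in> Ob" for x
    using N1 N2 that subspace_add[OF left_module_subspace[OF M that]]
    unfolding left_submodule_def by blast
  moreover have "subspace {a + b | a b. a \<in> N1 x \<and> b \<in> N2 x}" if "x \<in> Ob" for x
    using N1 N2 that subspace_sums unfolding left_submodule_def by blast
  moreover have "act x y f (a + b) \<in> {a + b | a b. a \<in> N1 y \<and> b \<in> N2 y}"
    if "x \<in> Ob" "y \<in> Ob" "f \<in> Hom x y" "a \<in> N1 x" "b \<in> N2 x" for x y f a b
  proof -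
    have "act x y f (a + b) = act x y f a + act x y f b"
      using left_module_act_add[OF M] N1 N2 that unfolding left_submodule_def by blast
    then show ?thesis
      using N1 N2 that unfolding left_submodule_def by blast
  qed
  ultimately show ?thesis
    unfolding left_submodule_def by blast
qed

lemma left_submodule_sum_upper_bound:
  assumes M: "left_module sm Ob Hom cmp idm sv V act"
    and N1: "left_submodule Ob Hom sv V act N1" and N2: "left_submodule Ob Hom sv V act N2"
    and x: "x \<in> Ob"
  shows "N1 x \<subseteq> {a + b | a b. a \<in> N1 x \<and> b \<in> N2 x}"
    and "N2 x \<subseteq> {a + b | a b. a \<in> N1 x \<and> b \<in> N2 x}"
proof -
  interpret vector_space sv using M by (rule left_module_vector_space)
  have "0 \<in> N1 x" "0 \<in> N2 x"
    using N1 N2 x subspace_0 unfolding left_submodule_def by blast+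
  moreover have "a + 0 \<in> {a + b | a b. a \<in> N1 x \<and> b \<in> N2 x}" if "a \<in> N1 x" for a
    using that \<open>0 \<in> N2 x\<close> by blast
  moreover have "0 + b \<in> {a + b | a b. a \<in> N1 x \<and> b \<in> N2 x}" if "b \<in> N2 x" for b
    using that \<open>0 \<in> N1 x\<close> by blast
  ultimately show "N1 x \<subseteq> {a + b | a b. a \<in> N1 x \<and> b \<in> N2 x}"
    and "N2 x \<subseteq> {a + b | a b. a \<in> N1 x \<and> b \<in> N2 x}"
    by auto
qed

definition cyclic_submodule ::
    "('o \<Rightarrow> 'o \<Rightarrow> 'm set) \<Rightarrow> ('o \<Rightarrow> 'o \<Rightarrow> 'm \<Rightarrow> 'v \<Rightarrow> 'v) \<Rightarrow> 'o \<Rightarrow> 'v \<Rightarrow> 'o \<Rightarrow> 'v set"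
  where "cyclic_submodule Hom act x v y = (\<lambda>f. act x y f v) ` Hom x y"

lemma cyclic_submodule_fin_dim:
  assumes C: "kcat sm Ob Hom cmp idm" and M: "left_module sm Ob Hom cmp idm sv V act"
    and x: "x \<in> Ob" and y: "y \<in> Ob" and v: "v \<in> V x"
    and fin: "fin_dim_sub sm (Hom x y)"
  shows "fin_dim_sub sv (cyclic_submodule Hom act x v y)"
  unfolding cyclic_submodule_def
  using kcat_vector_space[OF C] left_module_vector_space[OF M] fin
  by (rule fin_dim_sub_image[where g="\<lambda>f. act x y f v"])
    (use left_module_act_add_hom[OF M x y _ _ v] left_module_act_scale_hom[OF M x y _ v] in auto)

lemma cyclic_submodule_left_submodule:
  assumes C: "kcat sm Ob Hom cmp idm" and M: "left_module sm Ob Hom cmp idm sv V act"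
    and x: "x \<in> Ob" and v: "v \<in> V x"
    and fin: "\<And>y. y \<in> Ob \<Longrightarrow> fin_dim_sub sm (Hom x y)"
  shows "left_submodule Ob Hom sv V act (cyclic_submodule Hom act x v)"
proof -
  interpret vector_space sv using M by (rule left_module_vector_space)
  have "subspace (cyclic_submodule Hom act x v y)" if "y \<in> Ob" for y
    using cyclic_submodule_fin_dim[OF C M x that v fin[OF that]]
    by (rule fin_dim_sub_subspace[OF left_module_vector_space[OF M]])
  moreover have "act y z g w \<in> cyclic_submodule Hom act x v z"
    if "y \<in> Ob" "z \<in> Ob" "g \<in> Hom y z" "w \<in> cyclic_submodule Hom act x v y" for y z g w
  proof -
    obtain f where "f \<in> Hom x y" "w = act x y f v"
      using \<open>w \<in> cyclic_submodule Hom act x v y\<close> unfolding cyclic_submodule_def by blast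
    then have "act y z g w = act x z (cmp x y z g f) v" and "cmp x y z g f \<in> Hom x z"
      using left_module_act_comp[OF M] kcat_comp_closed[OF C] x v that by simp_all
    then show ?thesis unfolding cyclic_submodule_def by blast
  qed
  ultimately show ?thesis
    using left_module_act_closed[OF M x _ _ v]
    unfolding left_submodule_def cyclic_submodule_def by blast
qed

lemma cyclic_submodule_self:
  assumes C: "kcat sm Ob Hom cmp idm" and M: "left_module sm Ob Hom cmp idm sv V act"
    and x: "x \<in> Ob" and v: "v \<in> V x"
  shows "v \<in> cyclic_submodule Hom act x v x"
  using kcat_id_closed[OF C x] left_module_act_id[OF M x v]
  unfolding cyclic_submodule_def by force

lemma directed_union_locally_finite_left_submodules:
  assumes C: "kcat sm Ob Hom cmp idm"
    and fin: "\<And>x y. x \<in> Ob \<Longrightarrow> y \<in> Ob \<Longrightarrow> fin_dim_sub sm (Hom x y)"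
    and M: "left_module sm Ob Hom cmp idm sv V act"
  shows "directed_union Ob V {N. left_submodule Ob Hom sv V act N \<and> locally_finite_mod Ob sv N}"
proof -
  interpret vector_space sv using M by (rule left_module_vector_space)
  let ?S = "{N. left_submodule Ob Hom sv V act N \<and> locally_finite_mod Ob sv N}"
  have zero: "(\<lambda>_. {0}) \<in> ?S"
    using left_submodule_zero[OF M] fin_dim_sub_zero[OF vector_space_axioms]
    unfolding locally_finite_mod_def by simp
  have directed: "\<exists>N3\<in>?S. \<forall>x\<in>Ob. N1 x \<subseteq> N3 x \<and> N2 x \<subseteq> N3 x"
    if N1: "N1 \<in> ?S" and N2: "N2 \<in> ?S" for N1 N2
  proof -
    let ?N3 = "\<lambda>x. {a + b | a b. a \<in> N1 x \<and> b \<in> N2 x}"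
    show ?thesis
    proof (rule bexI)
      show "?N3 \<in> ?S"
        using left_submodule_sum[OF M] fin_dim_sub_sum[OF vector_space_axioms] N1 N2
        unfolding locally_finite_mod_def by simp
      show "\<forall>x\<in>Ob. N1 x \<subseteq> ?N3 x \<and> N2 x \<subseteq> ?N3 x"
        using N1 N2 by (simp add: left_submodule_sum_upper_bound[OF M])
    qed
  qed
  have union: "V x = (\<Union>N\<in>?S. N x)" if x: "x \<in> Ob" for x
  proof
    show "(\<Union>N\<in>?S. N x) \<subseteq> V x"
      using x unfolding left_submodule_def by auto
    show "V x \<subseteq> (\<Union>N\<in>?S. N x)"
    proof
      fix v assume v: "v \<in> V x"
      then have "cyclic_submodule Hom act x v \<in> ?S"
        using cyclic_submodule_left_submodule[OF C M x v] cyclic_submodule_fin_dim[OF C M x _ v]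
          fin x unfolding locally_finite_mod_def by simp
      then show "v \<in> (\<Union>N\<in>?S. N x)"
        using cyclic_submodule_self[OF C M x v] by blast
    qed
  qed
  show ?thesis
    unfolding directed_union_def using zero directed union by (intro conjI ballI) auto
qed

theorem lemma6p6:
  fixes sm :: "'k::field \<Rightarrow> 'm::ab_group_add \<Rightarrow> 'm"
    and Ob :: "'o set"
    and Hom :: "'o \<Rightarrow> 'o \<Rightarrow> 'm set"
    and cmp :: "'o \<Rightarrow> 'o \<Rightarrow> 'o \<Rightarrow> 'm \<Rightarrow> 'm \<Rightarrow> 'm"
    and idm :: "'o \<Rightarrow> 'm"
  assumes "locally_finite_kcat sm Ob Hom cmp idm"
  shows "(\<forall>(sv :: 'k \<Rightarrow> 'v::ab_group_add \<Rightarrow> 'v) V act.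
            left_module sm Ob Hom cmp idm sv V act \<longrightarrow>
            directed_union Ob V
              {N. left_submodule Ob Hom sv V act N \<and> locally_finite_mod Ob sv N})
       \<and> (\<forall>(sv :: 'k \<Rightarrow> 'v \<Rightarrow> 'v) V act.
            right_module sm Ob Hom cmp idm sv V act \<longrightarrow>
            directed_union Ob V
              {N. right_submodule Ob Hom sv V act N \<and> locally_finite_mod Ob sv N})"
proof (intro conjI allI impI)
  have C: "kcat sm Ob Hom cmp idm"
    and fin: "\<And>x y. x \<in> Ob \<Longrightarrow> y \<in> Ob \<Longrightarrow> fin_dim_sub sm (Hom x y)"
    using assms unfolding locally_finite_kcat_def by blast+
  fix sv :: "'k \<Rightarrow> 'v \<Rightarrow> 'v" and V act
  show "directed_union Ob V {N. left_submodule Ob Hom sv V act N \<and> locally_finite_mod Ob sv N}"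
    if "left_module sm Ob Hom cmp idm sv V act"
    using C fin that by (rule directed_union_locally_finite_left_submodules)
  show "directed_union Ob V {N. right_submodule Ob Hom sv V act N \<and> locally_finite_mod Ob sv N}"
    if "right_module sm Ob Hom cmp idm sv V act"
    unfolding right_submodule_iff_left_submodule_opposite
    using kcat_opposite[OF C] fin that[unfolded right_module_iff_left_module_opposite]
    by (rule directed_union_locally_finite_left_submodules)
qed

end
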